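(* Let $\tilde R<0$ and let $\mathcal G=(\bar Q,\mu,\eta)$ be an intervention rule whose intervention set $\mathcal I$ is partial. Let $\pi$ be a policy that is $\varepsilon$-suboptimal for the absorbing MDP $\tilde{\mathcal M}$, and let $\pi'=\mathcal G(\pi)$. Then for any policy $\pi^*$, $$V^{\pi^*}(d_0)-V^\pi(d_0)\le\Big(|\tilde R|+\frac1{1-\gamma}\Big)P_{\mathcal G}(\pi^* )+\varepsilon,\qquad \bar V^\pi(d_0)\le\bar V^{\pi'}(d_0)+\frac{\varepsilon}{|\tilde R|}.$$
   Context: $\mathcal M=(\mathcal S,\mathcal A,P,r,\gamma)$ is a discounted MDP with discrete state and action spaces, reward $r(s,a)\in[0,1]$, discount $\gamma\in[0,1)$, initial distribution $d_0$. $\mathcal S$ contains two distinguished states $s_\triangleright,s_\circ$; $\mathcal S_{\mathrm{unsafe}}=\{s_\triangleright,s_\circ\}$, $\mathcal S_{\mathrm{safe}}=\mathcal S\setminus\mathcal S_{\mathrm{unsafe}}$; from $s_\triangleright$ every action leads to $s_\circ$ w.p. 1, $s_\circ$ is absorbing, $r=0$ on $\mathcal S_{\mathrm{unsafe}}$, $d_0(s_\circ)=0$. Cost $c(s,a)=\mathbb 1\{s=s_\triangleright\}$. For a stationary policy $\pi$ with trajectory law $\rho^\pi$ in $\mathcal M$ ($s_0\sim d_0$): $V^\pi(d_0)=\mathbb E_{\rho^\pi}[\sum_t\gamma^tr(s_t,a_t)]$, $\bar V^\pi(d_0)=\mathbb E_{\rho^\pi}[\sum_t\gamma^tc(s_t,a_t)]$.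 Intervention rule: $\mathcal G=(\bar Q,\mu,\eta)$ with backup policy $\mu$, $\eta\in[0,1]$, $\bar Q:\mathcal S_{\mathrm{safe}}\times\mathcal A\to[0,1]$; intervention set $\mathcal I=\{(s,a)\in\mathcal S_{\mathrm{safe}}\times\mathcal A:\bar Q(s,a)-\mathbb E_{a'\sim\mu(\cdot|s)}\bar Q(s,a')>\eta\}$; shielded policy $\mathcal G(\pi)(a|s)=\pi(a|s)\mathbb 1\{(s,a)\notin\mathcal I\}+w(s)\mu(a|s)$, $w(s)=\sum_{\tilde a:(s,\tilde a)\in\mathcal I}\pi(\tilde a|s)$. A set $\mathcal X\subseteq\mathcal S_{\mathrm{safe}}\times\mathcal A$ is partial if for every $(s,a)\in\mathcal X$ there is $a'$ with $(s,a')\notin\mathcal X$. Absorbing MDP: $\tilde{\mathcal M}=(\mathcal S\cup\{s_\dagger\},\mathcal A,\tilde P,\tilde r,\gamma)$: $\tilde r(s,a)=\tilde R$ if $(s,a)\in\mathcal I$, $\tilde r(s_\dagger,a)=0$, $\tilde r=r$ otherwise; $\tilde P(\cdot|s,a)$ is the point mass at $s_\dagger$ if $(s,a)\in\mathcal I$ or $s=s_\dagger$, else $P(\cdot|s,a)$. Policies are extended to $s_\dagger$ arbitrarily; $\tilde V^\pi(d_0)$ is the value in $\tilde{\mathcal M}$; $\tilde V^*(d_0)=\sup_\pi\tilde V^\pi(d_0)$; $\pi$ is $\varepsilon$-suboptimal if $\tilde V^*(d_0)-\tilde V^\pi(d_0)\le\varepsilon$. $P_{\mathcal G}(\pi)=(1-\gamma)\sum_{h\ge0}\gamma^h\Pr_{\rho^\pi}(\exists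 t\le h:(s_t,a_t)\in\mathcal I)$. *)

theory Defs
  imports "HOL-Probability.Probability"
begin

text \<open>Transition kernel P, stationary policy pol, initial distribution d0.
  traj P pol d0 h is the law of the trajectory prefix
  ((s_0,a_0),...,(s_h,a_h)) under the trajectory law rho^pol.\<close>

fun traj :: "('x \<Rightarrow> 'a \<Rightarrow> 'x pmf) \<Rightarrow> ('x \<Rightarrow> 'a pmf) \<Rightarrow> 'x pmf \<Rightarrow> nat \<Rightarrow> ('x \<times> 'a) list pmf" where
  "traj P pol d0 0 =
     bind_pmf d0 (\<lambda>s. bind_pmf (pol s) (\<lambda>a. return_pmf [(s, a)]))"
| "traj P pol d0 (Suc h) =
     bind_pmf (traj P pol d0 h) (\<lambda>xs.
       bind_pmf (P (fst (last xs)) (snd (last xs))) (\<lambda>s'.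
         bind_pmf (pol s') (\<lambda>a'. return_pmf (xs @ [(s', a')]))))"

definition disc_value ::
  "('x \<Rightarrow> 'a \<Rightarrow> 'x pmf) \<Rightarrow> ('x \<Rightarrow> 'a pmf) \<Rightarrow> 'x pmf \<Rightarrow> real \<Rightarrow> ('x \<Rightarrow> 'a \<Rightarrow> real) \<Rightarrow> real" where
  "disc_value P pol d0 \<gamma> f =
     (\<Sum>t. \<gamma> ^ t * measure_pmf.expectation (traj P pol d0 t) (\<lambda>xs. f (fst (last xs)) (snd (last xs))))"

definition cost :: "'s \<Rightarrow> 's \<Rightarrow> 'a \<Rightarrow> real" where
  "cost s_tri s a = (if s = s_tri then 1 else 0)"

definition interv_set ::
  "'s \<Rightarrow> 's \<Rightarrow> ('s \<Rightarrow> 'a \<Rightarrow> real) \<Rightarrow> ('s \<Rightarrow> 'a pmf) \<Rightarrow> real \<Rightarrow> ('s \<times> 'a) set" where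
  "interv_set s_tri s_circ Qbar \<mu> \<eta> =
     {(s, a). s \<notin> {s_tri, s_circ} \<and>
              Qbar s a - measure_pmf.expectation (\<mu> s) (Qbar s) > \<eta>}"

text \<open>Shielded policy G(pi): pmf with mass pi(a|s) 1{(s,a) notin I} + w(s) mu(a|s).\<close>
definition shield :: "('s \<times> 'a) set \<Rightarrow> ('s \<Rightarrow> 'a pmf) \<Rightarrow> ('s \<Rightarrow> 'a pmf) \<Rightarrow> ('s \<Rightarrow> 'a pmf)" where
  "shield I \<mu> pol = (\<lambda>s. bind_pmf (pol s) (\<lambda>a. if (s, a) \<in> I then \<mu> s else return_pmf a))"

definition partial_set :: "('s \<times> 'a) set \<Rightarrow> bool" where
  "partial_set X \<longleftrightarrow> (\<forall>(s, a) \<in> X. \<exists>a'. (s, a') \<notin> X)"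

text \<open>Absorbing MDP: states 's option, None = s_dagger.\<close>
definition abs_P :: "('s \<Rightarrow> 'a \<Rightarrow> 's pmf) \<Rightarrow> ('s \<times> 'a) set \<Rightarrow> 's option \<Rightarrow> 'a \<Rightarrow> 's option pmf" where
  "abs_P P I x a = (case x of None \<Rightarrow> return_pmf None
     | Some s \<Rightarrow> (if (s, a) \<in> I then return_pmf None else map_pmf Some (P s a)))"

definition abs_r :: "('s \<Rightarrow> 'a \<Rightarrow> real) \<Rightarrow> ('s \<times> 'a) set \<Rightarrow> real \<Rightarrow> 's option \<Rightarrow> 'a \<Rightarrow> real" where
  "abs_r r I R x a = (case x of None \<Rightarrow> 0
     | Some s \<Rightarrow> (if (s, a) \<in> I then R else r s a))"

definition abs_value ::
  "('s \<Rightarrow> 'a \<Rightarrow> 's pmf) \<Rightarrow> ('s \<Rightarrow> 'a \<Rightarrow> real) \<Rightarrow> real \<Rightarrow> 's pmf \<Rightarrow> ('s \<times> 'a) set \<Rightarrow> real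
    \<Rightarrow> ('s option \<Rightarrow> 'a pmf) \<Rightarrow> real" where
  "abs_value P r \<gamma> d0 I R pol = disc_value (abs_P P I) pol (map_pmf Some d0) \<gamma> (abs_r r I R)"

text \<open>Extension of a policy on S to S + {s_dagger} (arbitrary choice at s_dagger).\<close>
definition ext_pol :: "('s \<Rightarrow> 'a pmf) \<Rightarrow> 's option \<Rightarrow> 'a pmf" where
  "ext_pol pol x = (case x of None \<Rightarrow> pol undefined | Some s \<Rightarrow> pol s)"

definition abs_opt ::
  "('s \<Rightarrow> 'a \<Rightarrow> 's pmf) \<Rightarrow> ('s \<Rightarrow> 'a \<Rightarrow> real) \<Rightarrow> real \<Rightarrow> 's pmf \<Rightarrow> ('s \<times> 'a) set \<Rightarrow> real \<Rightarrow> real" where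
  "abs_opt P r \<gamma> d0 I R = (SUP pol. abs_value P r \<gamma> d0 I R pol)"

definition eps_subopt ::
  "('s \<Rightarrow> 'a \<Rightarrow> 's pmf) \<Rightarrow> ('s \<Rightarrow> 'a \<Rightarrow> real) \<Rightarrow> real \<Rightarrow> 's pmf \<Rightarrow> ('s \<times> 'a) set \<Rightarrow> real
    \<Rightarrow> real \<Rightarrow> ('s \<Rightarrow> 'a pmf) \<Rightarrow> bool" where
  "eps_subopt P r \<gamma> d0 I R \<epsilon> pol \<longleftrightarrow>
     abs_opt P r \<gamma> d0 I R - abs_value P r \<gamma> d0 I R (ext_pol pol) \<le> \<epsilon>"

definition interv_prob ::
  "('s \<Rightarrow> 'a \<Rightarrow> 's pmf) \<Rightarrow> real \<Rightarrow> 's pmf \<Rightarrow> ('s \<times> 'a) set \<Rightarrow> ('s \<Rightarrow> 'a pmf) \<Rightarrow> real" where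
  "interv_prob P \<gamma> d0 I pol =
     (1 - \<gamma>) * (\<Sum>h. \<gamma> ^ h * measure_pmf.prob (traj P pol d0 h) {xs. \<exists>p \<in> set xs. p \<in> I})"

end

theory Submission
  imports Defs
begin

(* Both MDPs agree up to the first intervention; after it the absorbing MDP collects R once and
   stops. Hence the absorbing value of a policy rho is S(rho) + R * P_G(rho), where S(rho) is the
   discounted reward earned before any intervention and P_G(rho) turns out to be the discounted
   probability of the first intervention. Since V(rho) <= S(rho) + P_G(rho) / (1 - gamma) and
   S(pi) <= V(pi), the chain  S(pi_star) + R P_G(pi_star) <= opt <= S(pi) + R P_G(pi) + eps  gives
   the regret bound. As the intervention set is partial, pi can be redirected to a policy that
   never triggers an intervention and earns at least S(pi); comparing it with opt yields
   |R| P_G(pi) <= eps. Finally the shielded policy accrues at least the pre-intervention cost of pi,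
   while after an intervention the state s_tri is entered at most once before s_circ absorbs; a
   telescoping bound charges those visits to the first intervention, i.e. to P_G(pi). *)

abbreviation E :: "'b pmf \<Rightarrow> ('b \<Rightarrow> real) \<Rightarrow> real" where
  "E M f \<equiv> measure_pmf.expectation M f"

lemma integrable_pmf_bounded:
  fixes f :: "'b \<Rightarrow> real"
  assumes "\<And>x. \<bar>f x\<bar> \<le> B"
  shows "integrable (measure_pmf M) f"
  by (rule measure_pmf.integrable_const_bound[where B=B]) (use assms in auto)

lemma expectation_bind_pmf:
  fixes f :: "'b \<Rightarrow> real"
  assumes "\<And>x. \<bar>f x\<bar> \<le> B"
  shows "E (bind_pmf M N) f = E M (\<lambda>x. E (N x) f)"
  unfolding measure_pmf_bind
  by (rule integral_bind[where K="count_space UNIV" and B=B and B'=1])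
     (auto simp: assms measure_pmf.emeasure_space_1 space_subprob_algebra
           intro: prob_space_imp_subprob_space measure_pmf.prob_space_axioms)

lemma expectation_cong_pmf: "(\<And>x. x \<in> set_pmf M \<Longrightarrow> f x = g x) \<Longrightarrow> E M f = E M g"
  by (rule integral_cong_AE) (auto intro: AE_pmfI)

lemma expectation_mono_pmf:
  fixes f g :: "'b \<Rightarrow> real"
  assumes "\<And>x. \<bar>f x\<bar> \<le> B" "\<And>x. \<bar>g x\<bar> \<le> B'" "\<And>x. x \<in> set_pmf M \<Longrightarrow> f x \<le> g x"
  shows "E M f \<le> E M g"
  by (rule integral_mono_AE) (auto intro: AE_pmfI integrable_pmf_bounded assms)

lemma expectation_nonneg_pmf: "(\<And>x. 0 \<le> (f :: _ \<Rightarrow> real) x) \<Longrightarrow> 0 \<le> E M f"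
  by (rule integral_nonneg_AE) (auto intro: AE_pmfI)

lemma abs_expectation_le:
  fixes f :: "'b \<Rightarrow> real"
  assumes "\<And>x. \<bar>f x\<bar> \<le> B"
  shows "\<bar>E M f\<bar> \<le> B"
proof -
  have "\<bar>E M f\<bar> \<le> E M (\<lambda>x. \<bar>f x\<bar>)"
    by (rule integral_abs_bound)
  also have "\<dots> \<le> E M (\<lambda>_. B)"
    by (rule expectation_mono_pmf[where B=B and B'="\<bar>B\<bar>"]) (use assms in auto)
  finally show ?thesis by simp
qed

lemma expectation_le_pmf:
  fixes f :: "'b \<Rightarrow> real"
  assumes "\<And>x. 0 \<le> f x" "\<And>x. f x \<le> B"
  shows "E M f \<le> B"
  using abs_expectation_le[of f B M] assms by (force intro: order_trans)

lemma expectation_add_pmf: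
  fixes f g :: "'b \<Rightarrow> real"
  assumes "\<And>x. \<bar>f x\<bar> \<le> B" "\<And>x. \<bar>g x\<bar> \<le> B'"
  shows "E M (\<lambda>x. f x + g x) = E M f + E M g"
  by (rule Bochner_Integration.integral_add) (auto intro: integrable_pmf_bounded assms)

lemma Bseq_expectation:
  fixes F :: "nat \<Rightarrow> 'b \<Rightarrow> real"
  assumes "\<And>t x. \<bar>F t x\<bar> \<le> B"
  shows "Bseq (\<lambda>t. E (M t) (F t))"
  by (rule BseqI'[where K=B]) (simp add: abs_expectation_le assms)

lemma Bseq_add_seq: "Bseq x \<Longrightarrow> Bseq y \<Longrightarrow> Bseq (\<lambda>t. x t + y t :: real)"
  by (simp add: Bseq_eq_bounded bounded_plus_comp)

section \<open>Discounted sums of bounded sequences\<close>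

definition disc_sum :: "real \<Rightarrow> (nat \<Rightarrow> real) \<Rightarrow> real" where
  "disc_sum \<gamma> x = (\<Sum>t. \<gamma> ^ t * x t)"

context
  fixes \<gamma> :: real
  assumes discount: "0 \<le> \<gamma>" "\<gamma> < 1"
begin

lemma summable_discounted:
  assumes "Bseq x"
  shows "summable (\<lambda>t. \<gamma> ^ t * x t)"
proof -
  obtain K where K: "\<And>t. norm (x t) \<le> K"
    using assms unfolding Bseq_def by blast
  show ?thesis
  proof (rule summable_comparison_test'[where g="\<lambda>t. K * \<gamma> ^ t" and N=0])
    show "summable (\<lambda>t. K * \<gamma> ^ t)"
      using discount by (intro summable_mult summable_geometric) auto
    show "norm (\<gamma> ^ t * x t) \<le> K * \<gamma> ^ t" for t
      using K[of t] discount by (simp add: abs_mult mult.commute mult_right_mono)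
  qed
qed

lemma disc_sum_add:
  "Bseq x \<Longrightarrow> Bseq y \<Longrightarrow> disc_sum \<gamma> (\<lambda>t. x t + y t) = disc_sum \<gamma> x + disc_sum \<gamma> y"
  unfolding disc_sum_def distrib_left by (intro suminf_add[symmetric] summable_discounted)

lemma disc_sum_diff:
  "Bseq x \<Longrightarrow> Bseq y \<Longrightarrow> disc_sum \<gamma> (\<lambda>t. x t - y t) = disc_sum \<gamma> x - disc_sum \<gamma> y"
  unfolding disc_sum_def right_diff_distrib by (intro suminf_diff[symmetric] summable_discounted)

lemma disc_sum_cmult: "Bseq x \<Longrightarrow> disc_sum \<gamma> (\<lambda>t. c * x t) = c * disc_sum \<gamma> x"
  unfolding disc_sum_def using suminf_mult[OF summable_discounted, of x c]
  by (simp add: algebra_simps)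

lemma disc_sum_mono:
  assumes "Bseq x" "Bseq y" "\<And>t. x t \<le> y t"
  shows "disc_sum \<gamma> x \<le> disc_sum \<gamma> y"
  unfolding disc_sum_def
  by (rule suminf_le) (use assms discount in \<open>auto intro: summable_discounted mult_left_mono\<close>)

lemma disc_sum_nonneg: "Bseq x \<Longrightarrow> (\<And>t. 0 \<le> x t) \<Longrightarrow> 0 \<le> disc_sum \<gamma> x"
  using disc_sum_mono[of "\<lambda>_. 0" x] by (simp add: disc_sum_def)

lemma disc_sum_Suc:
  assumes "Bseq x"
  shows "disc_sum \<gamma> x = x 0 + \<gamma> * disc_sum \<gamma> (\<lambda>t. x (Suc t))"
proof -
  have "disc_sum \<gamma> x = x 0 + (\<Sum>t. \<gamma> * (\<gamma> ^ t * x (Suc t)))"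
    using suminf_split_head[OF summable_discounted[OF assms]] unfolding disc_sum_def
    by (simp add: algebra_simps)
  also have "\<dots> = x 0 + \<gamma> * disc_sum \<gamma> (\<lambda>t. x (Suc t))"
    unfolding disc_sum_def
    by (simp add: suminf_mult summable_discounted Bseq_subseq assms)
  finally show ?thesis .
qed

lemma disc_sum_const: "disc_sum \<gamma> (\<lambda>_. c) = c / (1 - \<gamma>)"
  using discount suminf_geometric[of \<gamma>] suminf_mult2[OF summable_geometric, of \<gamma> c]
  by (simp add: disc_sum_def mult.commute)

lemma disc_sum_le_const:
  assumes "\<And>t. x t \<le> c" "Bseq x"
  shows "disc_sum \<gamma> x \<le> c / (1 - \<gamma>)"
  using disc_sum_mono[of x "\<lambda>_. c"] assms by (simp add: disc_sum_const)


lemma disc_sum_le_of_telescoping: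
  assumes "Bseq a" "Bseq w" "Bseq d" "\<And>t. 0 \<le> w t" "a 0 + w 0 \<le> d 0"
    and step: "\<And>t. a (Suc t) + w (Suc t) \<le> w t + d (Suc t)"
  shows "disc_sum \<gamma> a \<le> disc_sum \<gamma> d"
proof -
  have Bseq_aw: "Bseq (\<lambda>t. a t + w t)" and Bseq_wd: "Bseq (\<lambda>t. w t + d (Suc t))"
    using assms by (simp_all add: Bseq_add_seq Bseq_subseq)
  have "disc_sum \<gamma> a + disc_sum \<gamma> w
      = a 0 + w 0 + \<gamma> * disc_sum \<gamma> (\<lambda>t. a (Suc t) + w (Suc t))"
    using disc_sum_Suc[OF Bseq_aw] by (simp add: disc_sum_add assms)
  also have "\<dots> \<le> d 0 + \<gamma> * disc_sum \<gamma> (\<lambda>t. w t + d (Suc t))"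
  proof (rule add_mono[OF _ mult_left_mono])
    show "disc_sum \<gamma> (\<lambda>t. a (Suc t) + w (Suc t)) \<le> disc_sum \<gamma> (\<lambda>t. w t + d (Suc t))"
      using Bseq_subseq[OF Bseq_aw, of Suc] Bseq_wd step by (rule disc_sum_mono)
  qed (use discount assms in auto)
  also have "\<dots> = disc_sum \<gamma> d + \<gamma> * disc_sum \<gamma> w"
    using disc_sum_Suc[OF \<open>Bseq d\<close>] by (simp add: disc_sum_add assms Bseq_subseq algebra_simps)
  finally have "disc_sum \<gamma> a + disc_sum \<gamma> w \<le> disc_sum \<gamma> d + \<gamma> * disc_sum \<gamma> w" .
  moreover have "\<gamma> * disc_sum \<gamma> w \<le> disc_sum \<gamma> w"
    using discount disc_sum_nonneg[OF \<open>Bseq w\<close>] assms(4) by (simp add: mult_left_le_one_le)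
  ultimately show ?thesis by linarith
qed

end

section \<open>Trajectories and interventions\<close>

abbreviation at_last :: "('x \<Rightarrow> 'a \<Rightarrow> 'b) \<Rightarrow> ('x \<times> 'a) list \<Rightarrow> 'b" where
  "at_last f xs \<equiv> f (fst (last xs)) (snd (last xs))"

abbreviation hits :: "('x \<times> 'a) set \<Rightarrow> ('x \<times> 'a) list \<Rightarrow> bool" where
  "hits I xs \<equiv> \<exists>p \<in> set xs. p \<in> I"

abbreviation first_hit :: "('x \<times> 'a) set \<Rightarrow> ('x \<times> 'a) list \<Rightarrow> bool" where
  "first_hit I xs \<equiv> \<not> hits I (butlast xs) \<and> last xs \<in> I"

lemma expectation_traj_0:
  fixes F :: "('x \<times> 'a) list \<Rightarrow> real"
  assumes "\<And>xs. \<bar>F xs\<bar> \<le> B"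
  shows "E (traj P pol d0 0) F = E d0 (\<lambda>s. E (pol s) (\<lambda>a. F [(s, a)]))"
  by (simp add: expectation_bind_pmf[OF assms])

lemma expectation_traj_Suc:
  fixes F :: "('x \<times> 'a) list \<Rightarrow> real"
  assumes "\<And>xs. \<bar>F xs\<bar> \<le> B"
  shows "E (traj P pol d0 (Suc t)) F =
    E (traj P pol d0 t) (\<lambda>xs. E (P (fst (last xs)) (snd (last xs)))
        (\<lambda>s'. E (pol s') (\<lambda>a'. F (xs @ [(s', a')]))))"
  by (simp add: expectation_bind_pmf[OF assms])

lemma length_traj: "xs \<in> set_pmf (traj P pol d0 t) \<Longrightarrow> length xs = Suc t"
  by (induction t arbitrary: xs) auto

lemma traj_nonempty: "xs \<in> set_pmf (traj P pol d0 t) \<Longrightarrow> xs \<noteq> []"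
  using length_traj by fastforce

lemma hits_iff_butlast_or_last:
  "xs \<noteq> [] \<Longrightarrow> hits I xs \<longleftrightarrow> hits I (butlast xs) \<or> last xs \<in> I"
  by (metis append_butlast_last_id in_set_butlastD last_in_set rotate1.simps(2)
      set_ConsD set_rotate1)

lemma traj_avoids:
  assumes "\<And>s a. a \<in> set_pmf (pol s) \<Longrightarrow> (s, a) \<notin> I"
  shows "xs \<in> set_pmf (traj P pol d0 t) \<Longrightarrow> \<not> hits I xs"
  using assms by (induction t arbitrary: xs) fastforce+

lemma expectation_abs_P_step:
  assumes "\<And>a. F None a = 0"
  shows "E (abs_P P I x a) (\<lambda>s'. E (ext_pol pol s') (F s')) =
    (case x of None \<Rightarrow> 0
     | Some s \<Rightarrow> if (s, a) \<in> I then 0 else E (P s a) (\<lambda>s'. E (pol s') (F (Some s'))))"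
proof -
  have "F None = (\<lambda>_. 0)" using assms by auto
  then show ?thesis by (cases x) (simp_all add: abs_P_def ext_pol_def)
qed

lemma expectation_abs_traj:
  fixes F :: "'s option \<Rightarrow> 'a \<Rightarrow> real"
  assumes "\<And>x a. \<bar>F x a\<bar> \<le> B" and "\<And>a. F None a = 0"
  shows "E (traj (abs_P P I) (ext_pol pol) (map_pmf Some d0) t) (at_last F)
       = E (traj P pol d0 t) (\<lambda>xs. if hits I (butlast xs) then 0 else F (Some (fst (last xs))) (snd (last xs)))"
  using assms
proof (induction t arbitrary: F)
  case 0
  have "0 \<le> B" using "0.prems"(1) by (meson abs_ge_zero order_trans)
  with "0.prems" show ?case
    by (subst (1 2) expectation_traj_0[where B=B]) (auto simp: ext_pol_def)
next
  case (Suc t)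
  have "0 \<le> B" using Suc.prems(1) by (meson abs_ge_zero order_trans)
  define G where "G s a = E (P s a) (\<lambda>s'. E (pol s') (F (Some s')))" for s a
  define H where
    "H x a = (case x of None \<Rightarrow> 0 | Some s \<Rightarrow> if (s, a) \<in> I then 0 else G s a)" for x a
  have G_bound: "\<bar>G s a\<bar> \<le> B" for s a
    unfolding G_def by (intro abs_expectation_le Suc.prems(1))
  then have H_bound: "\<bar>H x a\<bar> \<le> B" for x a
    using \<open>0 \<le> B\<close> by (simp add: H_def split: option.split)
  have "E (traj (abs_P P I) (ext_pol pol) (map_pmf Some d0) (Suc t)) (at_last F)
      = E (traj (abs_P P I) (ext_pol pol) (map_pmf Some d0) t) (at_last H)"
    using Suc.prems unfolding H_def G_def
    by (subst expectation_traj_Suc[where B=B]) (simp_all add: expectation_abs_P_step)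
  also have "\<dots> = E (traj P pol d0 t)
      (\<lambda>xs. if hits I (butlast xs) then 0 else H (Some (fst (last xs))) (snd (last xs)))"
    using Suc.IH[of H] H_bound by (simp add: H_def)
  also have "\<dots> = E (traj P pol d0 t) (\<lambda>xs. if hits I xs then 0 else at_last G xs)"
    by (rule expectation_cong_pmf) (auto simp: H_def dest: traj_nonempty hits_iff_butlast_or_last)
  also have "\<dots> = E (traj P pol d0 (Suc t))
      (\<lambda>xs. if hits I (butlast xs) then 0 else F (Some (fst (last xs))) (snd (last xs)))"
    using Suc.prems(1) \<open>0 \<le> B\<close>
    by (subst expectation_traj_Suc[where B=B]) (auto intro!: expectation_cong_pmf simp: G_def)
  finally show ?case .
qed

definition exp_reward ::
  "('x \<Rightarrow> 'a \<Rightarrow> 'x pmf) \<Rightarrow> ('x \<Rightarrow> 'a pmf) \<Rightarrow> 'x pmf \<Rightarrow> ('x \<Rightarrow> 'a \<Rightarrow> real) \<Rightarrow> nat \<Rightarrow> real"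
  where "exp_reward P pol d0 f t = E (traj P pol d0 t) (at_last f)"

definition exp_safe_reward ::
  "('x \<Rightarrow> 'a \<Rightarrow> 'x pmf) \<Rightarrow> ('x \<Rightarrow> 'a pmf) \<Rightarrow> 'x pmf \<Rightarrow> ('x \<times> 'a) set \<Rightarrow> ('x \<Rightarrow> 'a \<Rightarrow> real) \<Rightarrow> nat \<Rightarrow> real"
  where "exp_safe_reward P pol d0 I f t =
    E (traj P pol d0 t) (\<lambda>xs. if hits I xs then 0 else at_last f xs)"

definition hit_prob ::
  "('x \<Rightarrow> 'a \<Rightarrow> 'x pmf) \<Rightarrow> ('x \<Rightarrow> 'a pmf) \<Rightarrow> 'x pmf \<Rightarrow> ('x \<times> 'a) set \<Rightarrow> nat \<Rightarrow> real"
  where "hit_prob P pol d0 I t = E (traj P pol d0 t) (\<lambda>xs. of_bool (hits I xs))"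

definition first_hit_prob ::
  "('x \<Rightarrow> 'a \<Rightarrow> 'x pmf) \<Rightarrow> ('x \<Rightarrow> 'a pmf) \<Rightarrow> 'x pmf \<Rightarrow> ('x \<times> 'a) set \<Rightarrow> nat \<Rightarrow> real"
  where "first_hit_prob P pol d0 I t = E (traj P pol d0 t) (\<lambda>xs. of_bool (first_hit I xs))"

lemma abs_exp_reward_le: "(\<And>s a. \<bar>f s a\<bar> \<le> B) \<Longrightarrow> \<bar>exp_reward P pol d0 f t\<bar> \<le> B"
  unfolding exp_reward_def by (rule abs_expectation_le)

lemma Bseq_exp_reward: "(\<And>s a. \<bar>f s a\<bar> \<le> B) \<Longrightarrow> Bseq (exp_reward P pol d0 f)"
  by (rule BseqI'[where K=B]) (simp add: abs_exp_reward_le)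

lemma Bseq_exp_safe_reward:
  assumes "\<And>s a. \<bar>f s a\<bar> \<le> B"
  shows "Bseq (exp_safe_reward P pol d0 I f)"
proof -
  have "0 \<le> B" using assms by (meson abs_ge_zero order_trans)
  with assms show ?thesis
    unfolding exp_safe_reward_def by (intro Bseq_expectation[where B=B]) simp
qed

lemma Bseq_hit_prob: "Bseq (hit_prob P pol d0 I)"
  unfolding hit_prob_def by (rule Bseq_expectation[where B=1]) simp

lemma Bseq_first_hit_prob: "Bseq (first_hit_prob P pol d0 I)"
  unfolding first_hit_prob_def by (rule Bseq_expectation[where B=1]) simp

lemma first_hit_prob_nonneg: "0 \<le> first_hit_prob P pol d0 I t"
  unfolding first_hit_prob_def by (simp add: expectation_nonneg_pmf)

lemma disc_value_eq_disc_sum: "disc_value P pol d0 \<gamma> f = disc_sum \<gamma> (exp_reward P pol d0 f)"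
  by (simp add: disc_value_def disc_sum_def exp_reward_def)

lemma interv_prob_eq_disc_sum: "interv_prob P \<gamma> d0 I pol = (1 - \<gamma>) * disc_sum \<gamma> (hit_prob P pol d0 I)"
proof -
  have "measure_pmf.prob M {xs. hits I xs} = E M (\<lambda>xs. of_bool (hits I xs))" for M
  proof -
    have "(\<lambda>xs. of_bool (hits I xs)) = (indicator {xs. hits I xs} :: _ \<Rightarrow> real)"
      by (auto simp: indicator_def)
    then show ?thesis by simp
  qed
  then show ?thesis by (simp add: interv_prob_def disc_sum_def hit_prob_def)
qed

lemma abs_abs_r_le:
  assumes "\<And>s a. \<bar>r s a\<bar> \<le> B"
  shows "\<bar>abs_r r I R x a\<bar> \<le> B + \<bar>R\<bar>"
proof -
  have "0 \<le> B" using assms by (meson abs_ge_zero order_trans)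
  with assms show ?thesis
    by (auto simp: abs_r_def split: option.split intro: add_increasing2 add_increasing)
qed

lemma exp_reward_abs:
  assumes r: "\<And>s a. \<bar>r s a\<bar> \<le> B"
  shows "exp_reward (abs_P P I) (ext_pol pol) (map_pmf Some d0) (abs_r r I R) t
       = exp_safe_reward P pol d0 I r t + R * first_hit_prob P pol d0 I t"
proof -
  have "0 \<le> B" using r by (meson abs_ge_zero order_trans)
  have "exp_reward (abs_P P I) (ext_pol pol) (map_pmf Some d0) (abs_r r I R) t
      = E (traj P pol d0 t) (\<lambda>xs. if hits I (butlast xs) then 0 else if last xs \<in> I then R else at_last r xs)"
    unfolding exp_reward_def
    by (subst expectation_abs_traj[where B="B + \<bar>R\<bar>", OF abs_abs_r_le[of r B, OF r]])
       (auto simp: abs_r_def cong: if_cong)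
  also have "\<dots> = E (traj P pol d0 t)
      (\<lambda>xs. (if hits I xs then 0 else at_last r xs) + R * of_bool (first_hit I xs))"
    by (rule expectation_cong_pmf) (auto dest: traj_nonempty hits_iff_butlast_or_last)
  also have "\<dots> = exp_safe_reward P pol d0 I r t + R * first_hit_prob P pol d0 I t"
    unfolding exp_safe_reward_def first_hit_prob_def
    by (subst expectation_add_pmf[where B=B and B'="\<bar>R\<bar>"]) (use r \<open>0 \<le> B\<close> in auto)
  finally show ?thesis .
qed

(* Intervened actions are replaced by a draw from nu; the shield and the intervention-free policy
   of interv_prob_le_of_eps_subopt are both of this form. *)
definition redirect ::
  "('x \<times> 'a) set \<Rightarrow> ('x \<Rightarrow> 'a \<Rightarrow> 'a pmf) \<Rightarrow> ('x \<Rightarrow> 'a pmf) \<Rightarrow> 'x \<Rightarrow> 'a pmf" where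
  "redirect I \<nu> pol s = bind_pmf (pol s) (\<lambda>a. if (s, a) \<in> I then \<nu> s a else return_pmf a)"

lemma shield_eq_redirect: "shield I \<mu> pol = redirect I (\<lambda>s _. \<mu> s) pol"
  by (simp add: shield_def redirect_def fun_eq_iff)

lemma expectation_redirect_ge:
  fixes h :: "'a \<Rightarrow> real"
  assumes "\<And>a. 0 \<le> h a" "\<And>a. h a \<le> B"
  shows "E (pol s) (\<lambda>a. if (s, a) \<in> I then 0 else h a) \<le> E (redirect I \<nu> pol s) h"
proof -
  have h_bound: "\<bar>h a\<bar> \<le> B" for a
    using assms[of a] by simp
  then have "\<bar>E (\<nu> s a) h\<bar> \<le> B" for a
    by (rule abs_expectation_le)
  moreover have "0 \<le> B" using h_bound by (meson abs_ge_zero order_trans)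
  ultimately show ?thesis using assms h_bound
    unfolding redirect_def
    by (subst expectation_bind_pmf[OF h_bound], intro expectation_mono_pmf[where B=B and B'=B])
       (auto intro: expectation_nonneg_pmf)
qed

lemma exp_safe_reward_le_redirect:
  fixes f :: "'x \<Rightarrow> 'a \<Rightarrow> real"
  assumes "\<And>s a. 0 \<le> f s a" "\<And>s a. f s a \<le> B"
  shows "exp_safe_reward P pol d0 I f t \<le> exp_reward P (redirect I \<nu> pol) d0 f t"
  using assms unfolding exp_safe_reward_def exp_reward_def
proof (induction t arbitrary: f)
  case 0
  have f_bound: "\<bar>f s a\<bar> \<le> B" for s a
    using "0.prems"[of s a] by simp
  have safe_bound: "\<bar>if (s, a) \<in> I then 0 else f s a\<bar> \<le> B" for s a
    using f_bound by (simp add: order_trans[OF _ f_bound])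
  have "E (traj P pol d0 0) (\<lambda>xs. if hits I xs then 0 else at_last f xs)
      = E d0 (\<lambda>s. E (pol s) (\<lambda>a. if (s, a) \<in> I then 0 else f s a))"
    by (subst expectation_traj_0[where B=B]) (simp_all add: f_bound order_trans[OF _ f_bound] cong: if_cong)
  also have "\<dots> \<le> E d0 (\<lambda>s. E (redirect I \<nu> pol s) (f s))"
    by (intro expectation_mono_pmf[where B=B and B'=B] abs_expectation_le expectation_redirect_ge[where B=B]
        safe_bound f_bound "0.prems")
  also have "\<dots> = E (traj P (redirect I \<nu> pol) d0 0) (at_last f)"
    by (subst expectation_traj_0[where B=B]) (simp_all add: f_bound)
  finally show ?case .
next
  case (Suc t)
  let ?pol' = "redirect I \<nu> pol"
  have f_bound: "\<bar>f s a\<bar> \<le> B" for s a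
    using Suc.prems[of s a] by simp
  have safe_bound: "\<bar>if (s, a) \<in> I then 0 else f s a\<bar> \<le> B" for s a
    using f_bound by (simp add: order_trans[OF _ f_bound])
  define g where "g s a = E (P s a) (\<lambda>s'. E (pol s') (\<lambda>a'. if (s', a') \<in> I then 0 else f s' a'))" for s a
  define g' where "g' s a = E (P s a) (\<lambda>s'. E (?pol' s') (f s'))" for s a
  have g'_bounds: "0 \<le> g' s a" "g' s a \<le> B" for s a
    unfolding g'_def using Suc.prems by (auto intro!: expectation_nonneg_pmf expectation_le_pmf)
  have g_bounds: "0 \<le> g s a" "g s a \<le> B" for s a
    unfolding g_def using Suc.prems order_trans[OF Suc.prems] by (auto intro!: expectation_nonneg_pmf expectation_le_pmf)
  have "g s a \<le> g' s a" for s a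
    unfolding g_def g'_def
    by (intro expectation_mono_pmf[where B=B and B'=B] abs_expectation_le
        expectation_redirect_ge[where B=B] safe_bound f_bound Suc.prems)
  have "E (traj P pol d0 (Suc t)) (\<lambda>xs. if hits I xs then 0 else at_last f xs)
      = E (traj P pol d0 t) (\<lambda>xs. if hits I xs then 0 else at_last g xs)"
    by (subst expectation_traj_Suc[where B=B])
       (auto simp: f_bound order_trans[OF _ f_bound] g_def cong: if_cong intro!: expectation_cong_pmf)
  also have "\<dots> \<le> E (traj P pol d0 t) (\<lambda>xs. if hits I xs then 0 else at_last g' xs)"
    using g_bounds g'_bounds \<open>\<And>s a. g s a \<le> g' s a\<close>
    by (intro expectation_mono_pmf[where B=B and B'=B]) (auto simp: order_trans[OF _ g_bounds(2)])
  also have "\<dots> \<le> E (traj P ?pol' d0 t) (at_last g')"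
    by (rule Suc.IH) (use g'_bounds in auto)
  also have "\<dots> = E (traj P ?pol' d0 (Suc t)) (at_last f)"
    by (subst expectation_traj_Suc[where B=B]) (simp_all add: f_bound g'_def)
  finally show ?case .
qed

lemma hit_prob_0: "hit_prob P pol d0 I 0 = first_hit_prob P pol d0 I 0"
  unfolding hit_prob_def first_hit_prob_def
proof (rule expectation_cong_pmf)
  fix xs assume "xs \<in> set_pmf (traj P pol d0 0)"
  then obtain p where "xs = [p]"
    using length_traj by (metis length_0_conv length_Suc_conv)
  then show "of_bool (hits I xs) = (of_bool (first_hit I xs) :: real)"
    by simp
qed

lemma hit_prob_Suc:
  "hit_prob P pol d0 I (Suc t) = hit_prob P pol d0 I t + first_hit_prob P pol d0 I (Suc t)"
proof -
  have "hit_prob P pol d0 I (Suc t)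
      = E (traj P pol d0 (Suc t)) (\<lambda>xs. of_bool (hits I (butlast xs)) + of_bool (first_hit I xs))"
    unfolding hit_prob_def
    by (rule expectation_cong_pmf) (auto dest: traj_nonempty hits_iff_butlast_or_last)
  also have "\<dots> = E (traj P pol d0 (Suc t)) (\<lambda>xs. of_bool (hits I (butlast xs)))
      + first_hit_prob P pol d0 I (Suc t)"
    unfolding first_hit_prob_def by (rule expectation_add_pmf[where B=1 and B'=1]) simp_all
  also have "E (traj P pol d0 (Suc t)) (\<lambda>xs. of_bool (hits I (butlast xs))) = hit_prob P pol d0 I t"
    unfolding hit_prob_def by (subst expectation_traj_Suc[where B=1]) simp_all
  finally show ?thesis .
qed

lemma exp_safe_reward_le_exp_reward:
  assumes "\<And>s a. 0 \<le> f s a" "\<And>s a. f s a \<le> B"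
  shows "exp_safe_reward P pol d0 I f t \<le> exp_reward P pol d0 f t"
  unfolding exp_safe_reward_def exp_reward_def
  using assms order_trans[OF assms]
  by (intro expectation_mono_pmf[where B=B and B'=B]) auto

lemma exp_reward_le_safe_plus_hit_prob:
  assumes "\<And>s a. 0 \<le> f s a \<and> f s a \<le> 1"
  shows "exp_reward P pol d0 f t \<le> exp_safe_reward P pol d0 I f t + hit_prob P pol d0 I t"
proof -
  have "exp_reward P pol d0 f t
      \<le> E (traj P pol d0 t) (\<lambda>xs. (if hits I xs then 0 else at_last f xs) + of_bool (hits I xs))"
    unfolding exp_reward_def using assms
    by (intro expectation_mono_pmf[where B=1 and B'=1]) (auto simp: abs_le_iff)
  also have "\<dots> = exp_safe_reward P pol d0 I f t + hit_prob P pol d0 I t"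
    unfolding exp_safe_reward_def hit_prob_def using assms
    by (intro expectation_add_pmf[where B=1 and B'=1]) auto
  finally show ?thesis .
qed

lemma redirect_avoids:
  assumes "partial_set I" and "a \<in> set_pmf (redirect I (\<lambda>s _. return_pmf (SOME a'. (s, a') \<notin> I)) pol s)"
  shows "(s, a) \<notin> I"
proof -
  obtain a0 where "a0 \<in> set_pmf (pol s)"
    and a: "a \<in> set_pmf (if (s, a0) \<in> I then return_pmf (SOME a'. (s, a') \<notin> I) else return_pmf a0)"
    using assms(2) unfolding redirect_def by auto
  show ?thesis
  proof (cases "(s, a0) \<in> I")
    case True
    then have "\<exists>a'. (s, a') \<notin> I"
      using \<open>partial_set I\<close> unfolding partial_set_def by blast
    with a True show ?thesis
      using someI_ex[of "\<lambda>a'. (s, a') \<notin> I"] by simp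
  next
    case False
    with a show ?thesis by simp
  qed
qed

lemma
  assumes "\<And>s a. a \<in> set_pmf (pol s) \<Longrightarrow> (s, a) \<notin> I"
  shows exp_safe_reward_avoiding: "exp_safe_reward P pol d0 I f t = exp_reward P pol d0 f t"
    and first_hit_prob_avoiding: "first_hit_prob P pol d0 I t = 0"
proof -
  have "\<not> hits I xs" if "xs \<in> set_pmf (traj P pol d0 t)" for xs
    using traj_avoids[where pol=pol and I=I, OF assms that] .
  moreover have "last xs \<in> set xs" if "xs \<in> set_pmf (traj P pol d0 t)" for xs
    using traj_nonempty[OF that] by simp
  ultimately show "exp_safe_reward P pol d0 I f t = exp_reward P pol d0 f t"
    and "first_hit_prob P pol d0 I t = 0"
    unfolding exp_safe_reward_def exp_reward_def first_hit_prob_def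
    by (auto intro: expectation_cong_pmf[where g="\<lambda>_. 0", simplified] expectation_cong_pmf)
qed

definition hit_in_prob ::
  "('x \<Rightarrow> 'a \<Rightarrow> 'x pmf) \<Rightarrow> ('x \<Rightarrow> 'a pmf) \<Rightarrow> 'x pmf \<Rightarrow> ('x \<times> 'a) set \<Rightarrow> 'x set \<Rightarrow> nat \<Rightarrow> real"
  where "hit_in_prob P pol d0 I S t =
    E (traj P pol d0 t) (\<lambda>xs. of_bool (hits I xs \<and> fst (last xs) \<in> S))"

lemma Bseq_hit_in_prob: "Bseq (hit_in_prob P pol d0 I S)"
  unfolding hit_in_prob_def by (rule Bseq_expectation[where B=1]) simp

lemma hit_in_prob_nonneg: "0 \<le> hit_in_prob P pol d0 I S t"
  unfolding hit_in_prob_def by (simp add: expectation_nonneg_pmf)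

lemma hit_in_prob_Un:
  assumes "A \<inter> B = {}"
  shows "hit_in_prob P pol d0 I (A \<union> B) t = hit_in_prob P pol d0 I A t + hit_in_prob P pol d0 I B t"
  unfolding hit_in_prob_def using assms
  by (subst expectation_add_pmf[where B=1 and B'=1, symmetric]) (auto intro!: expectation_cong_pmf)

lemma hit_in_prob_le_hit_prob: "hit_in_prob P pol d0 I S t \<le> hit_prob P pol d0 I t"
  unfolding hit_in_prob_def hit_prob_def by (intro expectation_mono_pmf[where B=1 and B'=1]) auto

lemma hit_in_prob_0_le: "hit_in_prob P pol d0 I S 0 \<le> first_hit_prob P pol d0 I 0"
  using hit_in_prob_le_hit_prob hit_prob_0 by metis

lemma hit_in_prob_Suc_le:
  assumes trapped: "\<And>s a. s \<in> A \<Longrightarrow> set_pmf (P s a) \<inter> S = {}"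
  shows "hit_in_prob P pol d0 I S (Suc t) \<le> hit_in_prob P pol d0 I (- A) t + first_hit_prob P pol d0 I (Suc t)"
proof -
  have step: "E (P s a) (\<lambda>s'. of_bool (b \<and> s' \<in> S)) \<le> of_bool (b \<and> s \<in> - A)" for s a b
  proof (cases "s \<in> A")
    case True
    then have "E (P s a) (\<lambda>s'. of_bool (b \<and> s' \<in> S)) = E (P s a) (\<lambda>_. 0)"
      using trapped by (intro expectation_cong_pmf) auto
    then show ?thesis by simp
  next
    case False
    then show ?thesis
      by (cases b) (auto intro!: expectation_le_pmf expectation_nonneg_pmf)
  qed
  have "hit_in_prob P pol d0 I S (Suc t)
      \<le> E (traj P pol d0 (Suc t))
          (\<lambda>xs. of_bool (hits I (butlast xs) \<and> fst (last xs) \<in> S) + of_bool (first_hit I xs))"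
    unfolding hit_in_prob_def
    by (intro expectation_mono_pmf[where B=1 and B'=2]) (auto dest: traj_nonempty hits_iff_butlast_or_last)
  also have "\<dots> = E (traj P pol d0 (Suc t)) (\<lambda>xs. of_bool (hits I (butlast xs) \<and> fst (last xs) \<in> S))
      + first_hit_prob P pol d0 I (Suc t)"
    unfolding first_hit_prob_def by (rule expectation_add_pmf[where B=1 and B'=1]) simp_all
  also have "E (traj P pol d0 (Suc t)) (\<lambda>xs. of_bool (hits I (butlast xs) \<and> fst (last xs) \<in> S))
      = E (traj P pol d0 t) (\<lambda>xs. E (at_last P xs) (\<lambda>s'. of_bool (hits I xs \<and> s' \<in> S)))"
    by (subst expectation_traj_Suc[where B=1]) simp_all
  also have "\<dots> \<le> hit_in_prob P pol d0 I (- A) t"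
    unfolding hit_in_prob_def
    by (intro expectation_mono_pmf[where B=1 and B'=1] abs_expectation_le step) auto
  finally show ?thesis by simp
qed

lemma exp_reward_cost:
  "exp_reward P pol d0 (cost s_tri) t = exp_safe_reward P pol d0 I (cost s_tri) t + hit_in_prob P pol d0 I {s_tri} t"
  unfolding exp_reward_def exp_safe_reward_def hit_in_prob_def
  by (subst expectation_add_pmf[where B=1 and B'=1, symmetric])
     (auto simp: cost_def intro!: expectation_cong_pmf)

section \<open>Discounted values\<close>

context
  fixes \<gamma> :: real
  assumes discount: "0 \<le> \<gamma>" "\<gamma> < 1"
begin

lemma abs_value_ext_pol:
  assumes "\<And>s a. \<bar>r s a\<bar> \<le> B"
  shows "abs_value P r \<gamma> d0 I R (ext_pol pol)
       = disc_sum \<gamma> (exp_safe_reward P pol d0 I r) + R * disc_sum \<gamma> (first_hit_prob P pol d0 I)"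
proof -
  have "exp_reward (abs_P P I) (ext_pol pol) (map_pmf Some d0) (abs_r r I R)
      = (\<lambda>t. exp_safe_reward P pol d0 I r t + R * first_hit_prob P pol d0 I t)"
    using exp_reward_abs[where r=r and B=B, OF assms] by blast
  moreover have "Bseq (\<lambda>t. R * first_hit_prob P pol d0 I t)"
    by (rule Bseq_mult[OF Bfun_const Bseq_first_hit_prob])
  ultimately show ?thesis
    unfolding abs_value_def disc_value_eq_disc_sum
    by (simp add: disc_sum_add[OF discount] disc_sum_cmult[OF discount] Bseq_first_hit_prob
        Bseq_exp_safe_reward[where f=r and B=B, OF assms])
qed

lemma abs_value_le_abs_opt:
  assumes "\<And>s a. \<bar>r s a\<bar> \<le> B"
  shows "abs_value P r \<gamma> d0 I R pol \<le> abs_opt P r \<gamma> d0 I R"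
proof -
  have abs_r_bound: "\<And>s a. \<bar>abs_r r I R s a\<bar> \<le> B + \<bar>R\<bar>"
    by (rule abs_abs_r_le[where r=r and B=B, OF assms])
  have "abs_value P r \<gamma> d0 I R pol \<le> (B + \<bar>R\<bar>) / (1 - \<gamma>)" for pol
    unfolding abs_value_def disc_value_eq_disc_sum
    using abs_exp_reward_le[of "abs_r r I R", OF abs_r_bound]
    by (intro disc_sum_le_const[OF discount] Bseq_exp_reward[of "abs_r r I R", OF abs_r_bound])
       (simp add: abs_le_iff)
  then have "bdd_above (range (abs_value P r \<gamma> d0 I R))"
    by (rule bdd_aboveI2)
  then show ?thesis unfolding abs_opt_def by (rule cSUP_upper[OF UNIV_I])
qed

lemma disc_sum_first_hit_prob:
  shows "disc_sum \<gamma> (first_hit_prob P pol d0 I) = interv_prob P \<gamma> d0 I pol"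
proof -
  let ?Q = "hit_prob P pol d0 I"
  have "disc_sum \<gamma> (first_hit_prob P pol d0 I)
      = ?Q 0 + \<gamma> * disc_sum \<gamma> (\<lambda>t. ?Q (Suc t) - ?Q t)"
    by (simp add: disc_sum_Suc[OF discount Bseq_first_hit_prob] hit_prob_0 hit_prob_Suc)
  also have "\<dots> = ?Q 0 + \<gamma> * disc_sum \<gamma> (\<lambda>t. ?Q (Suc t)) - \<gamma> * disc_sum \<gamma> ?Q"
    by (simp add: disc_sum_diff[OF discount] Bseq_hit_prob Bseq_subseq right_diff_distrib)
  also have "\<dots> = (1 - \<gamma>) * disc_sum \<gamma> ?Q"
    by (simp add: disc_sum_Suc[OF discount Bseq_hit_prob, symmetric] algebra_simps)
  finally show ?thesis by (simp add: interv_prob_eq_disc_sum)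
qed

lemma abs_value_ext_pol_interv_prob:
  assumes "\<And>s a. \<bar>r s a\<bar> \<le> B"
  shows "abs_value P r \<gamma> d0 I R (ext_pol pol)
       = disc_sum \<gamma> (exp_safe_reward P pol d0 I r) + R * interv_prob P \<gamma> d0 I pol"
  by (simp add: abs_value_ext_pol[where r=r and B=B, OF assms] disc_sum_first_hit_prob)

lemma interv_prob_nonneg: "0 \<le> interv_prob P \<gamma> d0 I pol"
  unfolding disc_sum_first_hit_prob[symmetric]
  by (intro disc_sum_nonneg[OF discount] Bseq_first_hit_prob first_hit_prob_nonneg)

lemma regret_le_interv_prob:
  assumes r: "\<And>s a. 0 \<le> r s a \<and> r s a \<le> 1" and "R < 0"
    and subopt: "eps_subopt P r \<gamma> d0 I R \<epsilon> pol"
  shows "disc_value P pol_star d0 \<gamma> r - disc_value P pol d0 \<gamma> r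
      \<le> (\<bar>R\<bar> + 1 / (1 - \<gamma>)) * interv_prob P \<gamma> d0 I pol_star + \<epsilon>"
proof -
  let ?V = "\<lambda>\<rho>. abs_value P r \<gamma> d0 I R (ext_pol \<rho>)"
  let ?S = "\<lambda>\<rho>. disc_sum \<gamma> (exp_safe_reward P \<rho> d0 I r)"
  have r_bound: "\<bar>r s a\<bar> \<le> 1" for s a
    using r[of s a] by simp
  have V_eq: "?V \<rho> = ?S \<rho> + R * interv_prob P \<gamma> d0 I \<rho>" for \<rho>
    by (rule abs_value_ext_pol_interv_prob[where r=r and B=1, OF r_bound])
  have "disc_value P pol_star d0 \<gamma> r
      \<le> disc_sum \<gamma> (\<lambda>t. exp_safe_reward P pol_star d0 I r t + hit_prob P pol_star d0 I t)"
    unfolding disc_value_eq_disc_sum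
    by (intro disc_sum_mono[OF discount] exp_reward_le_safe_plus_hit_prob r Bseq_add_seq
        Bseq_exp_reward[where f=r and B=1, OF r_bound] Bseq_exp_safe_reward[where f=r and B=1, OF r_bound] Bseq_hit_prob)
  also have "\<dots> = ?S pol_star + interv_prob P \<gamma> d0 I pol_star / (1 - \<gamma>)"
    using discount
    by (simp add: disc_sum_add[OF discount] Bseq_exp_safe_reward[where f=r and B=1, OF r_bound] Bseq_hit_prob
        interv_prob_eq_disc_sum)
  also have "?S pol_star = ?V pol_star - R * interv_prob P \<gamma> d0 I pol_star"
    by (simp add: V_eq)
  also have "?V pol_star \<le> ?V pol + \<epsilon>"
  proof -
    have "?V pol_star \<le> abs_opt P r \<gamma> d0 I R"
      by (rule abs_value_le_abs_opt) (rule r_bound)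
    with subopt show ?thesis
      unfolding eps_subopt_def by linarith
  qed
  also have "?V pol \<le> disc_value P pol d0 \<gamma> r"
  proof -
    have "R * interv_prob P \<gamma> d0 I pol \<le> 0"
      using \<open>R < 0\<close> interv_prob_nonneg[of P d0 I pol] by (simp add: mult_nonpos_nonneg)
    moreover have "?S pol \<le> disc_value P pol d0 \<gamma> r"
      unfolding disc_value_eq_disc_sum using r
      by (intro disc_sum_mono[OF discount] exp_safe_reward_le_exp_reward[where B=1]
          Bseq_exp_reward[where f=r and B=1, OF r_bound] Bseq_exp_safe_reward[where f=r and B=1, OF r_bound]) auto
    ultimately show ?thesis by (simp add: V_eq)
  qed
  finally show ?thesis
    using \<open>R < 0\<close> discount by (simp add: algebra_simps add_divide_distrib)
qed

lemma abs_value_avoiding: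
  assumes "\<And>s a. \<bar>r s a\<bar> \<le> B" and "\<And>s a. a \<in> set_pmf (pol s) \<Longrightarrow> (s, a) \<notin> I"
  shows "abs_value P r \<gamma> d0 I R (ext_pol pol) = disc_value P pol d0 \<gamma> r"
  using assms(2)
  by (simp add: abs_value_ext_pol[where r=r and B=B, OF assms(1)] disc_value_eq_disc_sum
      exp_safe_reward_avoiding first_hit_prob_avoiding disc_sum_def)

lemma interv_prob_le_of_eps_subopt:
  assumes r: "\<And>s a. 0 \<le> r s a \<and> r s a \<le> 1" and "R < 0" and "partial_set I"
    and subopt: "eps_subopt P r \<gamma> d0 I R \<epsilon> pol"
  shows "interv_prob P \<gamma> d0 I pol \<le> \<epsilon> / \<bar>R\<bar>"
proof -
  \<comment> \<open>Partiality lets every intervened action be replaced by a non-intervened one, so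
    \<open>fix_pol\<close> never triggers an intervention and its absorbing value is its true value.\<close>
  define fix_pol where "fix_pol = redirect I (\<lambda>s _. return_pmf (SOME a'. (s, a') \<notin> I)) pol"
  have r_bound: "\<bar>r s a\<bar> \<le> 1" for s a
    using r[of s a] by simp
  have avoids: "\<And>s a. a \<in> set_pmf (fix_pol s) \<Longrightarrow> (s, a) \<notin> I"
    unfolding fix_pol_def using \<open>partial_set I\<close> by (rule redirect_avoids)
  have "disc_sum \<gamma> (exp_safe_reward P pol d0 I r) \<le> disc_value P fix_pol d0 \<gamma> r"
    unfolding disc_value_eq_disc_sum fix_pol_def using r
    by (intro disc_sum_mono[OF discount] exp_safe_reward_le_redirect[where B=1]
        Bseq_exp_reward[where f=r and B=1, OF r_bound] Bseq_exp_safe_reward[where f=r and B=1, OF r_bound]) auto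
  also have "\<dots> = abs_value P r \<gamma> d0 I R (ext_pol fix_pol)"
    by (rule abs_value_avoiding[where B=1, OF r_bound avoids, symmetric])
  also have "\<dots> \<le> abs_value P r \<gamma> d0 I R (ext_pol pol) + \<epsilon>"
  proof -
    have "abs_value P r \<gamma> d0 I R (ext_pol fix_pol) \<le> abs_opt P r \<gamma> d0 I R"
      by (rule abs_value_le_abs_opt) (rule r_bound)
    with subopt show ?thesis
      unfolding eps_subopt_def by linarith
  qed
  also have "\<dots> = disc_sum \<gamma> (exp_safe_reward P pol d0 I r) + R * interv_prob P \<gamma> d0 I pol + \<epsilon>"
    by (simp add: abs_value_ext_pol_interv_prob[where r=r and B=1, OF r_bound])
  finally have "\<bar>R\<bar> * interv_prob P \<gamma> d0 I pol \<le> \<epsilon>"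
    using \<open>R < 0\<close> by simp
  then show ?thesis
    using \<open>R < 0\<close> by (simp add: field_simps)
qed

lemma cost_le_shield_plus_interv_prob:
  fixes P :: "'s \<Rightarrow> 'a \<Rightarrow> 's pmf"
  assumes "s_tri \<noteq> s_circ"
    and tri_step: "\<And>a. P s_tri a = return_pmf s_circ"
    and circ_abs: "\<And>a. P s_circ a = return_pmf s_circ"
  shows "disc_value P pol d0 \<gamma> (cost s_tri)
      \<le> disc_value P (shield I \<mu> pol) d0 \<gamma> (cost s_tri) + interv_prob P \<gamma> d0 I pol"
proof -
  let ?H = "hit_in_prob P pol d0 I"
  have cost_bound: "\<bar>cost s_tri s a\<bar> \<le> 1" for s and a :: 'a
    by (simp add: cost_def)
  have split: "?H {s_tri} t + ?H (- {s_tri, s_circ}) t = ?H (- {s_circ}) t" for t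
  proof -
    have "{s_tri} \<union> - {s_tri, s_circ} = - {s_circ}"
      using \<open>s_tri \<noteq> s_circ\<close> by auto
    then show ?thesis
      using hit_in_prob_Un[of "{s_tri}" "- {s_tri, s_circ}" P pol d0 I t] by simp
  qed
  have "disc_value P pol d0 \<gamma> (cost s_tri)
      = disc_sum \<gamma> (exp_safe_reward P pol d0 I (cost s_tri)) + disc_sum \<gamma> (?H {s_tri})"
  proof -
    have "exp_reward P pol d0 (cost s_tri) = (\<lambda>t. exp_safe_reward P pol d0 I (cost s_tri) t + ?H {s_tri} t)"
      by (rule ext) (rule exp_reward_cost)
    then show ?thesis
      by (simp add: disc_value_eq_disc_sum disc_sum_add[OF discount] Bseq_hit_in_prob
          Bseq_exp_safe_reward[where f="cost s_tri" and B=1, OF cost_bound])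
  qed
  also have "disc_sum \<gamma> (exp_safe_reward P pol d0 I (cost s_tri))
      \<le> disc_value P (shield I \<mu> pol) d0 \<gamma> (cost s_tri)"
    unfolding disc_value_eq_disc_sum shield_eq_redirect
    by (intro disc_sum_mono[OF discount] exp_safe_reward_le_redirect[where B=1]
        Bseq_exp_reward[where B=1] Bseq_exp_safe_reward[where B=1] cost_bound) (simp_all add: cost_def)
  \<comment> \<open>\<open>?H (- {s_tri, s_circ})\<close> is the intervened mass that can still move to \<open>s_tri\<close>;
    from \<open>s_tri\<close> it is absorbed in \<open>s_circ\<close>, so each unit is charged to \<open>s_tri\<close> at most once.\<close>
  also have "disc_sum \<gamma> (?H {s_tri}) \<le> disc_sum \<gamma> (first_hit_prob P pol d0 I)"
  proof (rule disc_sum_le_of_telescoping[OF discount _ _ _ hit_in_prob_nonneg])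
    show "?H {s_tri} 0 + ?H (- {s_tri, s_circ}) 0 \<le> first_hit_prob P pol d0 I 0"
      by (simp add: split hit_in_prob_0_le)
    have "set_pmf (P s a) \<inter> - {s_circ} = {}" if "s \<in> {s_tri, s_circ}" for s a
      using that by (auto simp: tri_step circ_abs)
    then show "?H {s_tri} (Suc t) + ?H (- {s_tri, s_circ}) (Suc t)
        \<le> ?H (- {s_tri, s_circ}) t + first_hit_prob P pol d0 I (Suc t)" for t
      unfolding split by (rule hit_in_prob_Suc_le)
  qed (simp_all add: Bseq_hit_in_prob Bseq_first_hit_prob)
  finally show ?thesis
    by (simp add: disc_sum_first_hit_prob)
qed

end

theorem mainTheorem10:
  fixes P :: "'s \<Rightarrow> 'a \<Rightarrow> 's pmf" and r :: "'s \<Rightarrow> 'a \<Rightarrow> real"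
    and \<gamma> :: real and d0 :: "'s pmf" and s_tri s_circ :: 's
    and Qbar :: "'s \<Rightarrow> 'a \<Rightarrow> real" and \<mu> :: "'s \<Rightarrow> 'a pmf" and \<eta> :: real
    and R :: real and \<epsilon> :: real and pol pol_star :: "'s \<Rightarrow> 'a pmf"
  assumes gamma: "0 \<le> \<gamma>" "\<gamma> < 1"
    and r_bounds: "\<And>s a. 0 \<le> r s a \<and> r s a \<le> 1"
    and distinct: "s_tri \<noteq> s_circ"
    and tri_step: "\<And>a. P s_tri a = return_pmf s_circ"
    and circ_abs: "\<And>a. P s_circ a = return_pmf s_circ"
    and r_unsafe: "\<And>a. r s_tri a = 0" "\<And>a. r s_circ a = 0"
    and d0_circ: "pmf d0 s_circ = 0"
    and Qbar_bounds: "\<And>s a. s \<notin> {s_tri, s_circ} \<Longrightarrow> 0 \<le> Qbar s a \<and> Qbar s a \<le> 1"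
    and eta: "0 \<le> \<eta>" "\<eta> \<le> 1"
    and R_neg: "R < 0"
    and partial: "partial_set (interv_set s_tri s_circ Qbar \<mu> \<eta>)"
    and subopt: "eps_subopt P r \<gamma> d0 (interv_set s_tri s_circ Qbar \<mu> \<eta>) R \<epsilon> pol"
  shows "disc_value P pol_star d0 \<gamma> r - disc_value P pol d0 \<gamma> r
           \<le> (\<bar>R\<bar> + 1 / (1 - \<gamma>)) * interv_prob P \<gamma> d0 (interv_set s_tri s_circ Qbar \<mu> \<eta>) pol_star + \<epsilon>
       \<and> disc_value P pol d0 \<gamma> (cost s_tri)
           \<le> disc_value P (shield (interv_set s_tri s_circ Qbar \<mu> \<eta>) \<mu> pol) d0 \<gamma> (cost s_tri)
              + \<epsilon> / \<bar>R\<bar>"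
proof -
  let ?I = "interv_set s_tri s_circ Qbar \<mu> \<eta>"
  have "disc_value P pol_star d0 \<gamma> r - disc_value P pol d0 \<gamma> r
      \<le> (\<bar>R\<bar> + 1 / (1 - \<gamma>)) * interv_prob P \<gamma> d0 ?I pol_star + \<epsilon>"
    using gamma r_bounds R_neg subopt by (rule regret_le_interv_prob)
  moreover have "disc_value P pol d0 \<gamma> (cost s_tri)
      \<le> disc_value P (shield ?I \<mu> pol) d0 \<gamma> (cost s_tri) + interv_prob P \<gamma> d0 ?I pol"
    using gamma distinct tri_step circ_abs by (rule cost_le_shield_plus_interv_prob)
  moreover have "interv_prob P \<gamma> d0 ?I pol \<le> \<epsilon> / \<bar>R\<bar>"
    using gamma r_bounds R_neg partial subopt by (rule interv_prob_le_of_eps_subopt)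
  ultimately show ?thesis
    by linarith
qed

end
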